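(* Let $\Gamma$ be a group, $M$ a $\Gamma$-module, and $\Delta$ the subgroup of $\Gamma$ consisting of the elements acting trivially on $M$. Then the inflation map $H^1(\Gamma/\Delta,M)\to H^1(\Gamma,M)$ restricts to an isomorphism $H^1_{\rm loc}(\Gamma/\Delta,M)\cong H^1_{\rm loc}(\Gamma,M)$.
   Context: For a group $\Gamma$ and a $\Gamma$-module $M$, $H^1_{\rm loc}(\Gamma,M)$ is the subgroup of $H^1(\Gamma,M)$ consisting of the classes $[Z]$ of cocycles $Z$ such that for every $\gamma\in\Gamma$ there exists $m_\gamma\in M$ with $Z_\gamma=\gamma m_\gamma-m_\gamma$. *)

theory Defs
  imports "HOL-Algebra.Algebra" "HOL-Library.FuncSet"
begin

text \<open>A (left) Gamma-module: an abelian group M (written multiplicatively, as is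
usual in HOL-Algebra) with an action of the group G by group automorphisms.\<close>
definition gmodule :: "('g, 'a) monoid_scheme \<Rightarrow> ('m, 'b) monoid_scheme \<Rightarrow> ('g \<Rightarrow> 'm \<Rightarrow> 'm) \<Rightarrow> bool" where
  "gmodule G M act \<longleftrightarrow> group G \<and> comm_group M
     \<and> (\<forall>g\<in>carrier G. \<forall>m\<in>carrier M. act g m \<in> carrier M)
     \<and> (\<forall>m\<in>carrier M. act \<one>\<^bsub>G\<^esub> m = m)
     \<and> (\<forall>g\<in>carrier G. \<forall>h\<in>carrier G. \<forall>m\<in>carrier M. act (g \<otimes>\<^bsub>G\<^esub> h) m = act g (act h m))
     \<and> (\<forall>g\<in>carrier G. \<forall>m\<in>carrier M. \<forall>n\<in>carrier M. act g (m \<otimes>\<^bsub>M\<^esub> n) = act g m \<otimes>\<^bsub>M\<^esub> act g n)"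

definition cocycles :: "('g, 'a) monoid_scheme \<Rightarrow> ('m, 'b) monoid_scheme \<Rightarrow> ('g \<Rightarrow> 'm \<Rightarrow> 'm) \<Rightarrow> ('g \<Rightarrow> 'm) set" where
  "cocycles G M act = {Z \<in> carrier G \<rightarrow>\<^sub>E carrier M.
      \<forall>g\<in>carrier G. \<forall>h\<in>carrier G. Z (g \<otimes>\<^bsub>G\<^esub> h) = Z g \<otimes>\<^bsub>M\<^esub> act g (Z h)}"

definition coboundary :: "('g, 'a) monoid_scheme \<Rightarrow> ('m, 'b) monoid_scheme \<Rightarrow> ('g \<Rightarrow> 'm \<Rightarrow> 'm) \<Rightarrow> ('g \<Rightarrow> 'm) \<Rightarrow> bool" where
  "coboundary G M act Z \<longleftrightarrow> (\<exists>m\<in>carrier M. \<forall>g\<in>carrier G. Z g = act g m \<otimes>\<^bsub>M\<^esub> inv\<^bsub>M\<^esub> m)"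

definition cclass :: "('g, 'a) monoid_scheme \<Rightarrow> ('m, 'b) monoid_scheme \<Rightarrow> ('g \<Rightarrow> 'm \<Rightarrow> 'm) \<Rightarrow> ('g \<Rightarrow> 'm) \<Rightarrow> ('g \<Rightarrow> 'm) set" where
  "cclass G M act Z = {Z' \<in> cocycles G M act.
      coboundary G M act (\<lambda>g. Z' g \<otimes>\<^bsub>M\<^esub> inv\<^bsub>M\<^esub> Z g)}"

definition H1 :: "('g, 'a) monoid_scheme \<Rightarrow> ('m, 'b) monoid_scheme \<Rightarrow> ('g \<Rightarrow> 'm \<Rightarrow> 'm) \<Rightarrow> ('g \<Rightarrow> 'm) set monoid" where
  "H1 G M act = \<lparr> carrier = cclass G M act ` cocycles G M act,
      monoid.mult = (\<lambda>A B. cclass G M act (\<lambda>g\<in>carrier G. (SOME Z. Z \<in> A) g \<otimes>\<^bsub>M\<^esub> (SOME Z. Z \<in> B) g)),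
      monoid.one = cclass G M act (\<lambda>g\<in>carrier G. \<one>\<^bsub>M\<^esub>) \<rparr>"

definition loc_trivial :: "('g, 'a) monoid_scheme \<Rightarrow> ('m, 'b) monoid_scheme \<Rightarrow> ('g \<Rightarrow> 'm \<Rightarrow> 'm) \<Rightarrow> ('g \<Rightarrow> 'm) \<Rightarrow> bool" where
  "loc_trivial G M act Z \<longleftrightarrow> (\<forall>g\<in>carrier G. \<exists>m\<in>carrier M. Z g = act g m \<otimes>\<^bsub>M\<^esub> inv\<^bsub>M\<^esub> m)"

definition H1_loc :: "('g, 'a) monoid_scheme \<Rightarrow> ('m, 'b) monoid_scheme \<Rightarrow> ('g \<Rightarrow> 'm \<Rightarrow> 'm) \<Rightarrow> ('g \<Rightarrow> 'm) set monoid" where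
  "H1_loc G M act = (H1 G M act) \<lparr> carrier :=
      {C \<in> carrier (H1 G M act). \<exists>Z\<in>C. loc_trivial G M act Z} \<rparr>"

definition triv_kernel :: "('g, 'a) monoid_scheme \<Rightarrow> ('m, 'b) monoid_scheme \<Rightarrow> ('g \<Rightarrow> 'm \<Rightarrow> 'm) \<Rightarrow> 'g set" where
  "triv_kernel G M act = {g \<in> carrier G. \<forall>m\<in>carrier M. act g m = m}"

definition quot_act :: "('g \<Rightarrow> 'm \<Rightarrow> 'm) \<Rightarrow> 'g set \<Rightarrow> 'm \<Rightarrow> 'm" where
  "quot_act act C m = act (SOME g. g \<in> C) m"

definition inflation :: "('g, 'a) monoid_scheme \<Rightarrow> ('m, 'b) monoid_scheme \<Rightarrow> ('g \<Rightarrow> 'm \<Rightarrow> 'm) \<Rightarrow> ('g set \<Rightarrow> 'm) set \<Rightarrow> ('g \<Rightarrow> 'm) set" where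
  "inflation G M act C = cclass G M act
      (\<lambda>g\<in>carrier G. (SOME Z. Z \<in> C) (triv_kernel G M act #>\<^bsub>G\<^esub> g))"

end

theory Submission imports Defs begin

(* The proof works on the
   level of cocycles:
   - First we develop, for an arbitrary G-module, the basic cocycle calculus:
     coboundaries, the relation "cohomologous", description of classes and
     of the product in H^1 via pointwise products of representatives.
   - Then \<Delta> is shown to be normal and M becomes a G/\<Delta>-module.
   - Inflation of cocycles preserves cocycles, products and local triviality,
     and both preserves and reflects being cohomologous (a coboundary for G
     is the same as one for G/\<Delta>, since \<Delta> acts trivially); this gives an
     injective homomorphism on H^1_loc.
   - Surjectivity: a locally trivial cocycle W on G vanishes on \<Delta>
     (W d = d m - m = 0), hence is constant on \<Delta>-cosets by the cocycle
     identity, and so descends to a locally trivial cocycle on G/\<Delta>. *)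

locale gmod = G: group G + M: comm_group M
  for G :: "('g,'a) monoid_scheme" and M :: "('m,'b) monoid_scheme" +
  fixes act :: "'g \<Rightarrow> 'm \<Rightarrow> 'm"
  assumes act_closed: "g\<in>carrier G \<Longrightarrow> m\<in>carrier M \<Longrightarrow> act g m \<in> carrier M"
  and act_one: "m\<in>carrier M \<Longrightarrow> act \<one>\<^bsub>G\<^esub> m = m"
  and act_mult: "g\<in>carrier G \<Longrightarrow> h\<in>carrier G \<Longrightarrow> m\<in>carrier M \<Longrightarrow> act (g \<otimes>\<^bsub>G\<^esub> h) m = act g (act h m)"
  and act_hom: "g\<in>carrier G \<Longrightarrow> m\<in>carrier M \<Longrightarrow> n\<in>carrier M \<Longrightarrow> act g (m \<otimes>\<^bsub>M\<^esub> n) = act g m \<otimes>\<^bsub>M\<^esub> act g n"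

lemma gmodule_gmod: "gmodule G M act \<Longrightarrow> gmod G M act"
  unfolding gmodule_def gmod_def gmod_axioms_def by auto

lemma H1_loc_carrier:
  "carrier (H1_loc G M act) = {C \<in> cclass G M act ` cocycles G M act. \<exists>Z\<in>C. loc_trivial G M act Z}"
  by (simp add: H1_loc_def H1_def)

lemma H1_loc_mult: "monoid.mult (H1_loc G M act) = monoid.mult (H1 G M act)"
  by (simp add: H1_loc_def)

context gmod begin

lemma act_oneM: "g\<in>carrier G \<Longrightarrow> act g \<one>\<^bsub>M\<^esub> = \<one>\<^bsub>M\<^esub>"
proof -
  assume g: "g\<in>carrier G"
  have "act g \<one>\<^bsub>M\<^esub> \<otimes>\<^bsub>M\<^esub> \<one>\<^bsub>M\<^esub> = act g \<one>\<^bsub>M\<^esub> \<otimes>\<^bsub>M\<^esub> act g \<one>\<^bsub>M\<^esub>"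
    using act_hom[OF g, of "\<one>\<^bsub>M\<^esub>" "\<one>\<^bsub>M\<^esub>"] act_closed[OF g] by simp
  then show ?thesis using act_closed[OF g] M.l_cancel by (metis M.one_closed)
qed

lemma act_inv: "g\<in>carrier G \<Longrightarrow> m\<in>carrier M \<Longrightarrow> act g (inv\<^bsub>M\<^esub> m) = inv\<^bsub>M\<^esub> (act g m)"
proof -
  assume g: "g\<in>carrier G" and m: "m\<in>carrier M"
  have "act g (inv\<^bsub>M\<^esub> m) \<otimes>\<^bsub>M\<^esub> act g m = \<one>\<^bsub>M\<^esub>"
    using act_hom[OF g, of "inv\<^bsub>M\<^esub> m" m] m act_oneM[OF g] by simp
  then show ?thesis using M.inv_equality act_closed g m by (metis M.inv_closed)
qed

definition cobound :: "'m \<Rightarrow> 'g \<Rightarrow> 'm" where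
  "cobound m g = act g m \<otimes>\<^bsub>M\<^esub> inv\<^bsub>M\<^esub> m"

lemma cobound_closed: "m \<in> carrier M \<Longrightarrow> g \<in> carrier G \<Longrightarrow> cobound m g \<in> carrier M"
  unfolding cobound_def using act_closed by auto

lemma cobound_one: "g \<in> carrier G \<Longrightarrow> cobound \<one>\<^bsub>M\<^esub> g = \<one>\<^bsub>M\<^esub>"
  unfolding cobound_def using act_oneM by simp

lemma cobound_mult: "m \<in> carrier M \<Longrightarrow> n \<in> carrier M \<Longrightarrow> g \<in> carrier G \<Longrightarrow>
    cobound (m \<otimes>\<^bsub>M\<^esub> n) g = cobound m g \<otimes>\<^bsub>M\<^esub> cobound n g"
  unfolding cobound_def using act_closed act_hom by (simp add: M.inv_mult M.m_ac)

lemma cobound_inv: "m \<in> carrier M \<Longrightarrow> g \<in> carrier G \<Longrightarrow> cobound (inv\<^bsub>M\<^esub> m) g = inv\<^bsub>M\<^esub> (cobound m g)"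
  unfolding cobound_def using act_closed act_inv by (simp add: M.inv_mult M.m_ac)

definition cohomologous :: "('g \<Rightarrow> 'm) \<Rightarrow> ('g \<Rightarrow> 'm) \<Rightarrow> bool" where
  "cohomologous Z Z' \<longleftrightarrow> (\<exists>m\<in>carrier M. \<forall>g\<in>carrier G. Z' g = cobound m g \<otimes>\<^bsub>M\<^esub> Z g)"

lemma cocycle_closed: "Z \<in> cocycles G M act \<Longrightarrow> g \<in> carrier G \<Longrightarrow> Z g \<in> carrier M"
  unfolding cocycles_def by auto

lemma cclass_iff:
  assumes Z: "Z \<in> cocycles G M act"
  shows "Z' \<in> cclass G M act Z \<longleftrightarrow> Z' \<in> cocycles G M act \<and> cohomologous Z Z'"
proof -
  have "(Z' g \<otimes>\<^bsub>M\<^esub> inv\<^bsub>M\<^esub> Z g = cobound m g) = (Z' g = cobound m g \<otimes>\<^bsub>M\<^esub> Z g)"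
    if "g \<in> carrier G" "m \<in> carrier M" "Z' \<in> cocycles G M act" for g m
  proof -
    have "Z g \<in> carrier M" "Z' g \<in> carrier M" "cobound m g \<in> carrier M"
      using cocycle_closed Z that cobound_closed by auto
    then show ?thesis by (metis M.inv_closed M.m_assoc M.r_inv M.r_one M.l_inv M.m_closed)
  qed
  then show ?thesis
    unfolding cclass_def coboundary_def cohomologous_def cobound_def[symmetric] by (auto 0 3)
qed

lemma cohomologous_refl: "Z \<in> cocycles G M act \<Longrightarrow> cohomologous Z Z"
  unfolding cohomologous_def using cobound_one cocycle_closed by (intro bexI[of _ "\<one>\<^bsub>M\<^esub>"]) auto

lemma cohomologous_sym:
  assumes Z: "Z \<in> cocycles G M act" and c: "cohomologous Z Z'"
  shows "cohomologous Z' Z"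
proof -
  from c obtain m where m: "m \<in> carrier M" "\<forall>g\<in>carrier G. Z' g = cobound m g \<otimes>\<^bsub>M\<^esub> Z g"
    unfolding cohomologous_def by auto
  show ?thesis unfolding cohomologous_def
  proof (intro bexI[of _ "inv\<^bsub>M\<^esub> m"] ballI)
    fix g assume g: "g \<in> carrier G"
    have "cobound m g \<in> carrier M" "Z g \<in> carrier M" using cobound_closed m g cocycle_closed Z by auto
    then show "Z g = cobound (inv\<^bsub>M\<^esub> m) g \<otimes>\<^bsub>M\<^esub> Z' g"
      using m g by (simp add: cobound_inv M.m_assoc[symmetric])
  qed (use m in auto)
qed

lemma cohomologous_trans:
  assumes Z: "Z \<in> cocycles G M act" and c: "cohomologous Z Z'" "cohomologous Z' Z''"
  shows "cohomologous Z Z''"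
proof -
  from c obtain m n where m: "m \<in> carrier M" "\<forall>g\<in>carrier G. Z' g = cobound m g \<otimes>\<^bsub>M\<^esub> Z g"
     and n: "n \<in> carrier M" "\<forall>g\<in>carrier G. Z'' g = cobound n g \<otimes>\<^bsub>M\<^esub> Z' g"
    unfolding cohomologous_def by auto
  show ?thesis unfolding cohomologous_def
  proof (intro bexI[of _ "n \<otimes>\<^bsub>M\<^esub> m"] ballI)
    fix g assume g: "g \<in> carrier G"
    show "Z'' g = cobound (n \<otimes>\<^bsub>M\<^esub> m) g \<otimes>\<^bsub>M\<^esub> Z g"
      using m n g cobound_closed cocycle_closed[OF Z g] by (simp add: cobound_mult M.m_assoc)
  qed (use m n in auto)
qed

lemma cclass_self: "Z \<in> cocycles G M act \<Longrightarrow> Z \<in> cclass G M act Z"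
  using cclass_iff cohomologous_refl by blast

lemma cclass_some: "Z \<in> cocycles G M act \<Longrightarrow> (SOME Z'. Z' \<in> cclass G M act Z) \<in> cclass G M act Z"
  using cclass_self by (metis someI)

lemma cclass_eq:
  assumes "Z \<in> cocycles G M act" "Z' \<in> cclass G M act Z"
  shows "cclass G M act Z' = cclass G M act Z"
proof -
  have Z': "Z' \<in> cocycles G M act" "cohomologous Z Z'" using assms cclass_iff by auto
  show ?thesis
    using cclass_iff[OF assms(1)] cclass_iff[OF Z'(1)] cohomologous_sym[OF assms(1) Z'(2)]
      cohomologous_trans assms(1) Z' by blast
qed

lemma cclass_eq_iff:
  assumes "Z \<in> cocycles G M act" "Z' \<in> cocycles G M act"
  shows "cclass G M act Z = cclass G M act Z' \<longleftrightarrow> cohomologous Z Z'"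
  using cclass_eq cclass_self cclass_iff assms by metis

definition cochain_mult :: "('g \<Rightarrow> 'm) \<Rightarrow> ('g \<Rightarrow> 'm) \<Rightarrow> 'g \<Rightarrow> 'm" where
  "cochain_mult Z1 Z2 = (\<lambda>g\<in>carrier G. Z1 g \<otimes>\<^bsub>M\<^esub> Z2 g)"

lemma cochain_mult_cocycle:
  assumes Z: "Z1 \<in> cocycles G M act" "Z2 \<in> cocycles G M act"
  shows "cochain_mult Z1 Z2 \<in> cocycles G M act"
proof -
  have "Z1 (g \<otimes>\<^bsub>G\<^esub> h) \<otimes>\<^bsub>M\<^esub> Z2 (g \<otimes>\<^bsub>G\<^esub> h) = (Z1 g \<otimes>\<^bsub>M\<^esub> Z2 g) \<otimes>\<^bsub>M\<^esub> act g (Z1 h \<otimes>\<^bsub>M\<^esub> Z2 h)"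
    if g: "g \<in> carrier G" and h: "h \<in> carrier G" for g h
  proof -
    have e: "Z1 (g \<otimes>\<^bsub>G\<^esub> h) = Z1 g \<otimes>\<^bsub>M\<^esub> act g (Z1 h)" "Z2 (g \<otimes>\<^bsub>G\<^esub> h) = Z2 g \<otimes>\<^bsub>M\<^esub> act g (Z2 h)"
      using Z g h unfolding cocycles_def by auto
    have "Z1 g \<in> carrier M" "Z2 g \<in> carrier M" "act g (Z1 h) \<in> carrier M" "act g (Z2 h) \<in> carrier M"
      "Z1 h \<in> carrier M" "Z2 h \<in> carrier M"
      using cocycle_closed Z g h act_closed by auto
    then show ?thesis unfolding e using g by (simp add: act_hom M.m_ac)
  qed
  then show ?thesis using Z cocycle_closed unfolding cocycles_def cochain_mult_def by auto
qed

lemma cochain_mult_cohomologous: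
  assumes Z: "Z1 \<in> cocycles G M act" "Z2 \<in> cocycles G M act"
    and c: "cohomologous Z1 Z1'" "cohomologous Z2 Z2'"
  shows "cohomologous (cochain_mult Z1 Z2) (cochain_mult Z1' Z2')"
proof -
  from c obtain m n where m: "m \<in> carrier M" "\<forall>g\<in>carrier G. Z1' g = cobound m g \<otimes>\<^bsub>M\<^esub> Z1 g"
     and n: "n \<in> carrier M" "\<forall>g\<in>carrier G. Z2' g = cobound n g \<otimes>\<^bsub>M\<^esub> Z2 g"
    unfolding cohomologous_def by auto
  show ?thesis unfolding cohomologous_def
  proof (intro bexI[of _ "m \<otimes>\<^bsub>M\<^esub> n"] ballI)
    fix g assume g: "g \<in> carrier G"
    show "cochain_mult Z1' Z2' g = cobound (m \<otimes>\<^bsub>M\<^esub> n) g \<otimes>\<^bsub>M\<^esub> cochain_mult Z1 Z2 g"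
      using m n g cobound_closed cocycle_closed[OF Z(1) g] cocycle_closed[OF Z(2) g]
      by (simp add: cochain_mult_def cobound_mult M.m_ac)
  qed (use m n in auto)
qed

text \<open>The product in H^1 is the class of the pointwise product of representatives,
  independently of the representatives chosen by the definition of H1.\<close>
lemma H1_mult_cclass:
  assumes Z: "Z1 \<in> cocycles G M act" "Z2 \<in> cocycles G M act"
  shows "cclass G M act Z1 \<otimes>\<^bsub>H1 G M act\<^esub> cclass G M act Z2 = cclass G M act (cochain_mult Z1 Z2)"
proof -
  define S1 where "S1 = (SOME Z. Z \<in> cclass G M act Z1)"
  define S2 where "S2 = (SOME Z. Z \<in> cclass G M act Z2)"
  have S: "S1 \<in> cocycles G M act" "cohomologous Z1 S1" "S2 \<in> cocycles G M act" "cohomologous Z2 S2"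
    using cclass_some[OF Z(1)] cclass_some[OF Z(2)] cclass_iff Z unfolding S1_def S2_def by auto
  have "cclass G M act Z1 \<otimes>\<^bsub>H1 G M act\<^esub> cclass G M act Z2 = cclass G M act (cochain_mult S1 S2)"
    unfolding H1_def cochain_mult_def S1_def S2_def by simp
  also have "\<dots> = cclass G M act (cochain_mult Z1 Z2)"
    using cclass_eq_iff cochain_mult_cocycle cochain_mult_cohomologous Z S cohomologous_sym by metis
  finally show ?thesis .
qed

lemma H1_loc_carrier_rep:
  assumes "C \<in> carrier (H1_loc G M act)"
  obtains Z where "Z \<in> cocycles G M act" "loc_trivial G M act Z" "C = cclass G M act Z"
proof -
  obtain Z0 Z where Z0: "Z0 \<in> cocycles G M act" "C = cclass G M act Z0"
    and Z: "Z \<in> C" "loc_trivial G M act Z"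
    using assms unfolding H1_loc_carrier by auto
  then have "Z \<in> cocycles G M act" "cclass G M act Z = C" using cclass_eq cclass_iff by auto
  then show ?thesis using Z that by auto
qed

lemma H1_loc_carrier_in:
  "Z \<in> cocycles G M act \<Longrightarrow> loc_trivial G M act Z \<Longrightarrow> cclass G M act Z \<in> carrier (H1_loc G M act)"
  unfolding H1_loc_carrier using cclass_self by auto

abbreviation "D \<equiv> triv_kernel G M act"

lemma D_sub: "D \<subseteq> carrier G"
  unfolding triv_kernel_def by auto

lemma act_inv_cancel: "x \<in> carrier G \<Longrightarrow> m \<in> carrier M \<Longrightarrow> act x (act (inv\<^bsub>G\<^esub> x) m) = m"
  using act_mult[symmetric, of x "inv\<^bsub>G\<^esub> x" m] act_one by simp

lemma D_subgroup: "subgroup D G"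
proof (rule G.subgroupI)
  show "D \<subseteq> carrier G" by (rule D_sub)
  show "D \<noteq> {}" using act_one unfolding triv_kernel_def by auto
next
  fix a assume a: "a \<in> D"
  then have ag: "a \<in> carrier G" using D_sub by auto
  have "act (inv\<^bsub>G\<^esub> a) m = m" if m: "m \<in> carrier M" for m
    using act_inv_cancel[of "inv\<^bsub>G\<^esub> a" m] a m ag unfolding triv_kernel_def by auto
  then show "inv\<^bsub>G\<^esub> a \<in> D" using ag unfolding triv_kernel_def by auto
next
  fix a b assume "a \<in> D" "b \<in> D"
  then show "a \<otimes>\<^bsub>G\<^esub> b \<in> D" unfolding triv_kernel_def by (auto simp: act_mult)
qed

lemma D_normal: "D \<lhd> G"
proof -
  have "x \<otimes>\<^bsub>G\<^esub> h \<otimes>\<^bsub>G\<^esub> inv\<^bsub>G\<^esub> x \<in> D" if x: "x \<in> carrier G" and h: "h \<in> D" for x h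
  proof -
    have hg: "h \<in> carrier G" using h D_sub by auto
    have "act (x \<otimes>\<^bsub>G\<^esub> h \<otimes>\<^bsub>G\<^esub> inv\<^bsub>G\<^esub> x) m = m" if m: "m \<in> carrier M" for m
    proof -
      have "act (x \<otimes>\<^bsub>G\<^esub> h \<otimes>\<^bsub>G\<^esub> inv\<^bsub>G\<^esub> x) m = act x (act h (act (inv\<^bsub>G\<^esub> x) m))"
        using x hg m by (simp add: act_mult act_closed)
      also have "\<dots> = act x (act (inv\<^bsub>G\<^esub> x) m)"
        using h m x act_closed unfolding triv_kernel_def by auto
      finally show ?thesis using act_inv_cancel x m by simp
    qed
    then show ?thesis using x hg unfolding triv_kernel_def by auto
  qed
  then show ?thesis using D_subgroup G.normal_inv_iff by blast
qed

lemma Q_carrier: "carrier (G Mod D) = (\<lambda>g. D #>\<^bsub>G\<^esub> g) ` carrier G"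
  by (rule carrier_FactGroup)

lemma Q_mult: "g \<in> carrier G \<Longrightarrow> h \<in> carrier G \<Longrightarrow>
    (D #>\<^bsub>G\<^esub> g) <#>\<^bsub>G\<^esub> (D #>\<^bsub>G\<^esub> h) = D #>\<^bsub>G\<^esub> (g \<otimes>\<^bsub>G\<^esub> h)"
  using normal.rcos_sum[OF D_normal] by simp

lemma rcos_self_mem: "g \<in> carrier G \<Longrightarrow> g \<in> D #>\<^bsub>G\<^esub> g"
  using D_subgroup subgroup.one_closed unfolding r_coset_def by fastforce

text \<open>All elements of a coset \<Delta>g act like g; hence quot_act is well defined.\<close>
lemma quot_act_rcos: "g \<in> carrier G \<Longrightarrow> m \<in> carrier M \<Longrightarrow> quot_act act (D #>\<^bsub>G\<^esub> g) m = act g m"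
proof -
  assume g: "g \<in> carrier G" and m: "m \<in> carrier M"
  have "(SOME x. x \<in> D #>\<^bsub>G\<^esub> g) \<in> D #>\<^bsub>G\<^esub> g" using rcos_self_mem[OF g] by (metis someI)
  then obtain d where "d \<in> D" "(SOME x. x \<in> D #>\<^bsub>G\<^esub> g) = d \<otimes>\<^bsub>G\<^esub> g"
    unfolding r_coset_def by auto
  then show ?thesis
    unfolding quot_act_def using g m act_closed D_sub by (auto simp: act_mult triv_kernel_def)
qed

lemma quot_gmod: "gmod (G Mod D) M (quot_act act)"
proof -
  have "group (G Mod D)" using normal.factorgroup_is_group[OF D_normal] .
  moreover have "quot_act act \<one>\<^bsub>G Mod D\<^esub> m = m" if "m \<in> carrier M" for m
    using quot_act_rcos[of "\<one>\<^bsub>G\<^esub>" m] that D_sub act_one by simp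
  ultimately show ?thesis
    unfolding gmod_def gmod_axioms_def using M.comm_group_axioms
    by (auto simp: Q_carrier Q_mult quot_act_rcos act_closed act_mult act_hom)
qed

interpretation Q: gmod "G Mod D" M "quot_act act"
  by (rule quot_gmod)

definition inflate :: "('g set \<Rightarrow> 'm) \<Rightarrow> 'g \<Rightarrow> 'm" where
  "inflate Z = (\<lambda>g\<in>carrier G. Z (D #>\<^bsub>G\<^esub> g))"

lemma inflate_cocycle:
  assumes Z: "Z \<in> cocycles (G Mod D) M (quot_act act)"
  shows "inflate Z \<in> cocycles G M act"
proof -
  have Zc: "Z (D #>\<^bsub>G\<^esub> g) \<in> carrier M" if "g \<in> carrier G" for g
    using Z that unfolding cocycles_def Q_carrier by auto
  have "Z (D #>\<^bsub>G\<^esub> (g \<otimes>\<^bsub>G\<^esub> h)) = Z (D #>\<^bsub>G\<^esub> g) \<otimes>\<^bsub>M\<^esub> act g (Z (D #>\<^bsub>G\<^esub> h))"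
    if g: "g \<in> carrier G" and h: "h \<in> carrier G" for g h
  proof -
    have "Z ((D #>\<^bsub>G\<^esub> g) \<otimes>\<^bsub>G Mod D\<^esub> (D #>\<^bsub>G\<^esub> h)) =
        Z (D #>\<^bsub>G\<^esub> g) \<otimes>\<^bsub>M\<^esub> quot_act act (D #>\<^bsub>G\<^esub> g) (Z (D #>\<^bsub>G\<^esub> h))"
      using Z g h unfolding cocycles_def Q_carrier by auto
    then show ?thesis using g h Zc by (simp add: Q_mult quot_act_rcos)
  qed
  then show ?thesis using Zc unfolding cocycles_def inflate_def by auto
qed

text \<open>Since coboundaries for G and for G/\<Delta> are the same functions of m,
  inflation preserves and reflects being cohomologous.\<close>
lemma inflate_cohomologous_iff:
  "Q.cohomologous Z Z' \<longleftrightarrow> cohomologous (inflate Z) (inflate Z')"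
  unfolding Q.cohomologous_def cohomologous_def Q.cobound_def cobound_def inflate_def Q_carrier
  by (auto simp: quot_act_rcos)

lemma inflate_mult: "inflate (Q.cochain_mult Z1 Z2) = cochain_mult (inflate Z1) (inflate Z2)"
  unfolding Q.cochain_mult_def cochain_mult_def inflate_def Q_carrier
  by (auto simp: fun_eq_iff)

lemma inflate_loc_trivial:
  "loc_trivial (G Mod D) M (quot_act act) Z \<Longrightarrow> loc_trivial G M act (inflate Z)"
  unfolding loc_trivial_def inflate_def Q_carrier by (auto simp: quot_act_rcos)

text \<open>On classes, the map of the definition of inflation (which picks an arbitrary
  representative) is induced by inflate.\<close>
lemma inflation_cclass:
  assumes Z: "Z \<in> cocycles (G Mod D) M (quot_act act)"
  shows "inflation G M act (cclass (G Mod D) M (quot_act act) Z) = cclass G M act (inflate Z)"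
proof -
  define S where "S = (SOME Z'. Z' \<in> cclass (G Mod D) M (quot_act act) Z)"
  have S: "S \<in> cocycles (G Mod D) M (quot_act act)" "Q.cohomologous Z S"
    using Q.cclass_some[OF Z] Q.cclass_iff Z unfolding S_def by auto
  have "inflation G M act (cclass (G Mod D) M (quot_act act) Z) = cclass G M act (inflate S)"
    unfolding inflation_def inflate_def S_def by simp
  also have "\<dots> = cclass G M act (inflate Z)"
    using cclass_eq_iff inflate_cocycle Z S inflate_cohomologous_iff cohomologous_sym by metis
  finally show ?thesis .
qed

text \<open>A locally trivial cocycle vanishes on \<Delta>: W d = d m - m = 0.\<close>
lemma loc_trivial_vanishes_on_kernel:
  assumes W: "loc_trivial G M act W" and d: "d \<in> D"
  shows "W d = \<one>\<^bsub>M\<^esub>"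
proof -
  obtain m where "m \<in> carrier M" "W d = act d m \<otimes>\<^bsub>M\<^esub> inv\<^bsub>M\<^esub> m"
    using W d D_sub unfolding loc_trivial_def by auto
  then show ?thesis using d unfolding triv_kernel_def by auto
qed

text \<open>Hence, by the cocycle identity W(dg) = W d \<cdot> d(W g), it is constant on cosets.\<close>
lemma loc_trivial_const_on_cosets:
  assumes W: "W \<in> cocycles G M act" "loc_trivial G M act W" and g: "g \<in> carrier G"
    and x: "x \<in> D #>\<^bsub>G\<^esub> g"
  shows "W x = W g"
proof -
  obtain d where d: "d \<in> D" "x = d \<otimes>\<^bsub>G\<^esub> g" using x unfolding r_coset_def by auto
  have "W x = W d \<otimes>\<^bsub>M\<^esub> act d (W g)" using W(1) d D_sub g unfolding cocycles_def by auto
  also have "\<dots> = W g"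
    using loc_trivial_vanishes_on_kernel[OF W(2) d(1)] d(1) cocycle_closed[OF W(1) g]
    unfolding triv_kernel_def by auto
  finally show ?thesis .
qed

lemma loc_trivial_descends:
  assumes W: "W \<in> cocycles G M act" "loc_trivial G M act W"
  obtains Z where "Z \<in> cocycles (G Mod D) M (quot_act act)"
    "loc_trivial (G Mod D) M (quot_act act) Z" "inflate Z = W"
proof -
  define Z where "Z = (\<lambda>C\<in>carrier (G Mod D). W (SOME x. x \<in> C))"
  have Z_rcos: "Z (D #>\<^bsub>G\<^esub> g) = W g" if g: "g \<in> carrier G" for g
  proof -
    have "(SOME x. x \<in> D #>\<^bsub>G\<^esub> g) \<in> D #>\<^bsub>G\<^esub> g" using rcos_self_mem[OF g] by (metis someI)
    then show ?thesis unfolding Z_def using g loc_trivial_const_on_cosets[OF W g] Q_carrier by auto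
  qed
  have "Z \<in> cocycles (G Mod D) M (quot_act act)"
    unfolding cocycles_def
  proof (intro CollectI conjI ballI)
    show "Z \<in> carrier (G Mod D) \<rightarrow>\<^sub>E carrier M"
      using Z_rcos cocycle_closed[OF W(1)] by (auto simp: Z_def Q_carrier)
  next
    fix C1 C2 assume "C1 \<in> carrier (G Mod D)" "C2 \<in> carrier (G Mod D)"
    then obtain g h where gh: "g \<in> carrier G" "h \<in> carrier G" "C1 = D #>\<^bsub>G\<^esub> g" "C2 = D #>\<^bsub>G\<^esub> h"
      unfolding Q_carrier by auto
    show "Z (C1 \<otimes>\<^bsub>G Mod D\<^esub> C2) = Z C1 \<otimes>\<^bsub>M\<^esub> quot_act act C1 (Z C2)"
      using gh W(1) cocycle_closed[OF W(1)] unfolding cocycles_def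
      by (simp add: Q_mult Z_rcos quot_act_rcos)
  qed
  moreover have "loc_trivial (G Mod D) M (quot_act act) Z"
    using W(2) unfolding loc_trivial_def Q_carrier by (auto simp: Z_rcos quot_act_rcos)
  moreover have "inflate Z = W"
    using Z_rcos W(1) unfolding inflate_def cocycles_def by (auto simp: fun_eq_iff PiE_def extensional_def)
  ultimately show ?thesis using that by blast
qed

lemma inflation_hom:
  "inflation G M act \<in> hom (H1_loc (G Mod D) M (quot_act act)) (H1_loc G M act)"
proof (rule homI)
  fix C assume "C \<in> carrier (H1_loc (G Mod D) M (quot_act act))"
  then obtain Z where "Z \<in> cocycles (G Mod D) M (quot_act act)"
    "loc_trivial (G Mod D) M (quot_act act) Z" "C = cclass (G Mod D) M (quot_act act) Z"
    by (rule Q.H1_loc_carrier_rep)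
  then show "inflation G M act C \<in> carrier (H1_loc G M act)"
    using inflation_cclass inflate_cocycle inflate_loc_trivial H1_loc_carrier_in by simp
next
  fix A B
  assume "A \<in> carrier (H1_loc (G Mod D) M (quot_act act))" "B \<in> carrier (H1_loc (G Mod D) M (quot_act act))"
  then obtain Z1 Z2 where Z1: "Z1 \<in> cocycles (G Mod D) M (quot_act act)" "A = cclass (G Mod D) M (quot_act act) Z1"
    and Z2: "Z2 \<in> cocycles (G Mod D) M (quot_act act)" "B = cclass (G Mod D) M (quot_act act) Z2"
    by (metis Q.H1_loc_carrier_rep)
  have "inflation G M act (A \<otimes>\<^bsub>H1_loc (G Mod D) M (quot_act act)\<^esub> B)
      = cclass G M act (inflate (Q.cochain_mult Z1 Z2))"
    using Q.H1_mult_cclass Z1 Z2 inflation_cclass Q.cochain_mult_cocycle by (simp add: H1_loc_mult)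
  also have "\<dots> = inflation G M act A \<otimes>\<^bsub>H1_loc G M act\<^esub> inflation G M act B"
    using H1_mult_cclass inflate_cocycle Z1 Z2 inflation_cclass by (simp add: H1_loc_mult inflate_mult)
  finally show "inflation G M act (A \<otimes>\<^bsub>H1_loc (G Mod D) M (quot_act act)\<^esub> B)
      = inflation G M act A \<otimes>\<^bsub>H1_loc G M act\<^esub> inflation G M act B" .
qed

lemma inflation_inj:
  "inj_on (inflation G M act) (carrier (H1_loc (G Mod D) M (quot_act act)))"
proof (rule inj_onI)
  fix A B
  assume "A \<in> carrier (H1_loc (G Mod D) M (quot_act act))" "B \<in> carrier (H1_loc (G Mod D) M (quot_act act))"
    and eq: "inflation G M act A = inflation G M act B"
  then obtain Z1 Z2 where Z1: "Z1 \<in> cocycles (G Mod D) M (quot_act act)" "A = cclass (G Mod D) M (quot_act act) Z1"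
    and Z2: "Z2 \<in> cocycles (G Mod D) M (quot_act act)" "B = cclass (G Mod D) M (quot_act act) Z2"
    by (metis Q.H1_loc_carrier_rep)
  have "cclass G M act (inflate Z1) = cclass G M act (inflate Z2)"
    using eq Z1 Z2 inflation_cclass by simp
  then have "cohomologous (inflate Z1) (inflate Z2)"
    using cclass_eq_iff inflate_cocycle Z1 Z2 by blast
  then show "A = B" using inflate_cohomologous_iff Q.cclass_eq_iff Z1 Z2 by blast
qed

lemma inflation_surj:
  "carrier (H1_loc G M act) \<subseteq> inflation G M act ` carrier (H1_loc (G Mod D) M (quot_act act))"
proof
  fix C assume "C \<in> carrier (H1_loc G M act)"
  then obtain W where W: "W \<in> cocycles G M act" "loc_trivial G M act W" "C = cclass G M act W"
    by (rule H1_loc_carrier_rep)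
  obtain Z where Z: "Z \<in> cocycles (G Mod D) M (quot_act act)"
    "loc_trivial (G Mod D) M (quot_act act) Z" "inflate Z = W"
    using loc_trivial_descends[OF W(1,2)] by blast
  have "C = inflation G M act (cclass (G Mod D) M (quot_act act) Z)"
    using inflation_cclass Z W by simp
  then show "C \<in> inflation G M act ` carrier (H1_loc (G Mod D) M (quot_act act))"
    using Q.H1_loc_carrier_in Z by blast
qed

end

theorem lemma13:
  fixes G :: "('g, 'a) monoid_scheme" and M :: "('m, 'b) monoid_scheme" and act :: "'g \<Rightarrow> 'm \<Rightarrow> 'm"
  assumes "gmodule G M act"
  shows "inflation G M act \<in>
           iso (H1_loc (G Mod triv_kernel G M act) M (quot_act act)) (H1_loc G M act)"
proof -
  interpret gmod G M act using gmodule_gmod[OF assms] .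
  have "bij_betw (inflation G M act)
      (carrier (H1_loc (G Mod D) M (quot_act act))) (carrier (H1_loc G M act))"
    using inflation_inj inflation_surj inflation_hom unfolding bij_betw_def hom_def by blast
  then show ?thesis using inflation_hom unfolding iso_def by blast
qed

end
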